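(* Let $r,s\ge 1$ and let $A_1,\dots,A_r$ be real $s\times s$ matrices with non-negative entries. Let $A$ be the $rs\times rs$ block circulant matrix \[ A = \begin{pmatrix} A_1 & A_2 & A_3 & \dots & A_r\\ A_r & A_1 & A_2 & \dots & A_{r-1}\\ A_{r-1} & A_r & A_1 & \dots & A_{r-2}\\ \vdots & & & & \vdots\\ A_2 & A_3 & A_4 & \dots & A_1 \end{pmatrix}. \] Then $\rho(A) = \rho\left(\sum_{i=1}^r A_i \right)$.
   Context: For a square matrix $M$, $\rho(M)$ denotes its spectral radius. *)

theory Defs
  imports "Jordan_Normal_Form.Spectral_Radius"
begin

text \<open>Block circulant matrix built from a family of s x s blocks indexed 0..r-1
  (block k here corresponds to A_(k+1) in the paper). Block (p,q) is block ((q - p) mod r).\<close>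
definition block_circulant :: "nat \<Rightarrow> nat \<Rightarrow> (nat \<Rightarrow> real mat) \<Rightarrow> real mat" where
  "block_circulant r s B =
     mat (r * s) (r * s) (\<lambda>(i, j).
       B (nat ((int (j div s) - int (i div s)) mod int r)) $$ (i mod s, j mod s))"

definition real_spectral_radius :: "real mat \<Rightarrow> real" where
  "real_spectral_radius M = spectral_radius (map_mat complex_of_real M)"

end

theory Submission
  imports Defs
begin

text \<open>
  For a nonnegative matrix S, a vector u \<ge> 0, u \<noteq> 0 with \<mu> u \<le> S u forces \<mu> \<le> \<rho>(S)
  (Collatz--Wielandt): otherwise, for \<rho>(S) < c < \<mu>, the powers of S/c stay bounded while
  (S/c)^k u \<ge> (\<mu>/c)^k u grows. Conversely the moduli of an eigenvector for a dominant
  eigenvalue give such a u with \<mu> = \<rho>(S). Hence \<rho>(A) \<le> \<rho>(S) whenever a monotone linear map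
  carrying nonzero nonnegative vectors to nonzero ones intertwines A with S.
  Each block row and each block column of the block circulant A contains every A_i exactly once,
  so summing a vector over its r blocks intertwines A with \<Sum> A_i, and repeating a vector
  r times intertwines \<Sum> A_i with A.
\<close>

definition nonneg_mat :: "real mat \<Rightarrow> bool" where
  "nonneg_mat A \<longleftrightarrow> (\<forall>i<dim_row A. \<forall>j<dim_col A. 0 \<le> A $$ (i, j))"

lemma index_mult_mat_vec_sum:
  assumes "A \<in> carrier_mat nr n" and "v \<in> carrier_vec n" and "i < nr"
  shows "(A *\<^sub>v v) $ i = (\<Sum>j<n. A $$ (i, j) * v $ j)"
  using assms by (simp add: scalar_prod_def atLeast0LessThan)

lemma mult_mat_vec_mono:
  assumes A: "A \<in> carrier_mat nr n" and "nonneg_mat A" and "v \<le> w" and w: "w \<in> carrier_vec n"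
  shows "A *\<^sub>v v \<le> A *\<^sub>v w"
proof -
  have v: "v \<in> carrier_vec n"
    using \<open>v \<le> w\<close> w unfolding less_eq_vec_def carrier_vec_def by simp
  have "(A *\<^sub>v v) $ i \<le> (A *\<^sub>v w) $ i" if i: "i < nr" for i
    unfolding index_mult_mat_vec_sum[OF A v i] index_mult_mat_vec_sum[OF A w i]
  proof (rule sum_mono, rule mult_left_mono)
    fix j assume "j \<in> {..<n}"
    then show "v $ j \<le> w $ j" and "0 \<le> A $$ (i, j)"
      using \<open>v \<le> w\<close> \<open>nonneg_mat A\<close> A w i unfolding less_eq_vec_def nonneg_mat_def by auto
  qed
  then show ?thesis
    using A v w unfolding less_eq_vec_def by simp
qed

lemma nonneg_mat_pow:
  assumes A: "A \<in> carrier_mat n n" and "nonneg_mat A"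
  shows "nonneg_mat (A ^\<^sub>m k)"
proof (induction k)
  case 0
  show ?case by (simp add: nonneg_mat_def)
next
  case (Suc k)
  have "0 \<le> (A ^\<^sub>m k * A) $$ (i, j)" if "i < n" and "j < n" for i j
    using that A Suc assms(2) by (auto simp: scalar_prod_def nonneg_mat_def intro!: sum_nonneg)
  then show ?case
    using A by (simp add: nonneg_mat_def)
qed

lemma smult_vec_mono:
  fixes v w :: "real vec"
  assumes "0 \<le> x" and "v \<le> w"
  shows "x \<cdot>\<^sub>v v \<le> x \<cdot>\<^sub>v w"
  using assms unfolding less_eq_vec_def by (auto intro: mult_left_mono)

lemma smult_le_mult_mat_vec_pow:
  assumes A: "A \<in> carrier_mat n n" and "nonneg_mat A" and u: "u \<in> carrier_vec n"
    and "0 \<le> x" and sub: "x \<cdot>\<^sub>v u \<le> A *\<^sub>v u"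
  shows "x ^ k \<cdot>\<^sub>v u \<le> A ^\<^sub>m k *\<^sub>v u"
proof (induction k)
  case 0
  show ?case using u A by simp
next
  case (Suc k)
  have Ak: "A ^\<^sub>m k \<in> carrier_mat n n" using A by simp
  have "x ^ Suc k \<cdot>\<^sub>v u = x \<cdot>\<^sub>v (x ^ k \<cdot>\<^sub>v u)"
    by (simp add: smult_smult_assoc)
  also have "\<dots> \<le> x \<cdot>\<^sub>v (A ^\<^sub>m k *\<^sub>v u)"
    using Suc \<open>0 \<le> x\<close> by (rule smult_vec_mono[rotated])
  also have "\<dots> = A ^\<^sub>m k *\<^sub>v (x \<cdot>\<^sub>v u)"
    using mult_mat_vec[OF Ak u] by simp
  also have "\<dots> \<le> A ^\<^sub>m k *\<^sub>v (A *\<^sub>v u)"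
    using A u by (intro mult_mat_vec_mono[OF Ak nonneg_mat_pow[OF A \<open>nonneg_mat A\<close>] sub]) simp
  also have "\<dots> = A ^\<^sub>m Suc k *\<^sub>v u"
    by (simp add: assoc_mult_mat_vec[OF Ak A u])
  finally show ?case .
qed

lemma spectral_radius_nonneg:
  assumes "A \<in> carrier_mat n n" and "0 < n"
  shows "0 \<le> spectral_radius A"
  using spectral_radius_mem_max(1)[OF assms] by auto

lemma smult_mat_mult_mat_vec:
  assumes "A \<in> carrier_mat nr n" and "v \<in> carrier_vec n"
  shows "(c \<cdot>\<^sub>m A) *\<^sub>v v = (c :: 'a :: comm_ring) \<cdot>\<^sub>v (A *\<^sub>v v)"
  using assms by (intro eq_vecI) (auto simp: scalar_prod_def sum_distrib_left mult.assoc)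

lemma eigenvalue_smult_mat_imp:
  fixes A :: "'a :: field mat"
  assumes A: "A \<in> carrier_mat n n" and "c \<noteq> 0" and "eigenvalue (c \<cdot>\<^sub>m A) ev"
  shows "eigenvalue A (ev / c)"
proof -
  obtain v where v: "v \<in> carrier_vec n" "v \<noteq> 0\<^sub>v n" "(c \<cdot>\<^sub>m A) *\<^sub>v v = ev \<cdot>\<^sub>v v"
    using assms(3) A by (auto simp: eigenvalue_def eigenvector_def)
  have "A *\<^sub>v v = (1 / c) \<cdot>\<^sub>v ((c \<cdot>\<^sub>m A) *\<^sub>v v)"
    using A v(1) \<open>c \<noteq> 0\<close> by (simp add: smult_mat_mult_mat_vec smult_smult_assoc)
  also have "\<dots> = (ev / c) \<cdot>\<^sub>v v"
    using v(3) by (simp add: smult_smult_assoc)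
  finally show ?thesis
    using v A unfolding eigenvalue_def eigenvector_def by blast
qed

lemma spectral_radius_smult_mat_le:
  assumes A: "A \<in> carrier_mat n n" and "0 < n" and "c \<noteq> 0"
  shows "spectral_radius (c \<cdot>\<^sub>m A) \<le> norm c * spectral_radius A"
proof -
  obtain ev where ev: "eigenvalue (c \<cdot>\<^sub>m A) ev" "spectral_radius (c \<cdot>\<^sub>m A) = norm ev"
    using spectral_radius_mem_max(1)[of "c \<cdot>\<^sub>m A" n] A \<open>0 < n\<close> by (auto simp: spectrum_def)
  have "norm (ev / c) \<le> spectral_radius A"
    using eigenvalue_smult_mat_imp[OF A \<open>c \<noteq> 0\<close> ev(1)] spectral_radius_mem_max(2)[OF A \<open>0 < n\<close>]
    by (auto simp: spectrum_def)
  then show ?thesis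
    using ev(2) \<open>c \<noteq> 0\<close> by (simp add: norm_divide divide_le_eq mult.commute)
qed

lemma real_spectral_radius_smult_le:
  assumes A: "A \<in> carrier_mat n n" and "0 < n" and "c \<noteq> 0"
  shows "real_spectral_radius (c \<cdot>\<^sub>m A) \<le> \<bar>c\<bar> * real_spectral_radius A"
proof -
  have "map_mat complex_of_real (c \<cdot>\<^sub>m A) = complex_of_real c \<cdot>\<^sub>m map_mat complex_of_real A"
    using A by (intro eq_matI) auto
  then show ?thesis
    using spectral_radius_smult_mat_le[of "map_mat complex_of_real A" n "complex_of_real c"] assms
    by (simp add: real_spectral_radius_def)
qed

lemma real_spectral_radius_less_1_bounded_pow:
  assumes A: "A \<in> carrier_mat n n" and "real_spectral_radius A < 1"
  obtains C where "\<And>k i j. i < n \<Longrightarrow> j < n \<Longrightarrow> \<bar>(A ^\<^sub>m k) $$ (i, j)\<bar> \<le> C"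
proof -
  obtain C where C: "\<And>k. norm_bound (map_mat complex_of_real A ^\<^sub>m k) C"
    using spectral_radius_jnf_norm_bound_less_1_upper_triangular[of "map_mat complex_of_real A" n] assms
    by (auto simp: real_spectral_radius_def)
  have "\<bar>(A ^\<^sub>m k) $$ (i, j)\<bar> \<le> C" if "i < n" and "j < n" for k i j
    using C[of k] that A by (simp add: of_real_hom.mat_hom_pow[OF A, symmetric] norm_bound_def)
  then show thesis
    by (rule that)
qed

lemma collatz_wielandt_lower_bound:
  assumes S: "S \<in> carrier_mat n n" and "nonneg_mat S"
    and u: "u \<in> carrier_vec n" "0\<^sub>v n \<le> u" "u \<noteq> 0\<^sub>v n"
    and sub: "\<mu> \<cdot>\<^sub>v u \<le> S *\<^sub>v u"
  shows "\<mu> \<le> real_spectral_radius S"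
proof (rule ccontr)
  assume "\<not> \<mu> \<le> real_spectral_radius S"
  then have lt: "real_spectral_radius S < \<mu>" by simp
  obtain a where a: "a < n" "0 < u $ a"
    using u unfolding less_eq_vec_def by (metis eq_vecI carrier_vecD index_zero_vec order_le_less)
  then have "0 < n" by simp
  have "0 \<le> real_spectral_radius S"
    using spectral_radius_nonneg[of "map_mat complex_of_real S" n] S \<open>0 < n\<close>
    by (simp add: real_spectral_radius_def)
  define c where "c = (real_spectral_radius S + \<mu>) / 2"
  have c: "0 < c" "real_spectral_radius S < c" "c < \<mu>"
    using lt \<open>0 \<le> real_spectral_radius S\<close> by (auto simp: c_def)
  define T where "T = (1 / c) \<cdot>\<^sub>m S"
  have T: "T \<in> carrier_mat n n" and "nonneg_mat T"
    using S \<open>nonneg_mat S\<close> c by (auto simp: T_def nonneg_mat_def)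
  have "real_spectral_radius T \<le> (1 / c) * real_spectral_radius S"
    using real_spectral_radius_smult_le[OF S \<open>0 < n\<close>, of "1 / c"] c by (simp add: T_def)
  also have "\<dots> < 1"
    using c by (simp add: field_simps)
  finally obtain C where C: "\<And>k i j. i < n \<Longrightarrow> j < n \<Longrightarrow> \<bar>(T ^\<^sub>m k) $$ (i, j)\<bar> \<le> C"
    using real_spectral_radius_less_1_bounded_pow[OF T] by blast
  define x where "x = \<mu> / c"
  have "1 < x"
    using c by (simp add: x_def)
  have "x \<cdot>\<^sub>v u = (1 / c) \<cdot>\<^sub>v (\<mu> \<cdot>\<^sub>v u)"
    by (simp add: x_def smult_smult_assoc)
  also have "\<dots> \<le> (1 / c) \<cdot>\<^sub>v (S *\<^sub>v u)"
    using c sub by (intro smult_vec_mono) simp_all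
  also have "\<dots> = T *\<^sub>v u"
    using S u by (simp add: T_def smult_mat_mult_mat_vec)
  finally have "x ^ k \<cdot>\<^sub>v u \<le> T ^\<^sub>m k *\<^sub>v u" for k
    using \<open>1 < x\<close> by (intro smult_le_mult_mat_vec_pow[OF T \<open>nonneg_mat T\<close> u(1)]) simp_all
  have bounded: "x ^ k * u $ a \<le> C * (\<Sum>j<n. u $ j)" for k
  proof -
    have "x ^ k * u $ a \<le> (T ^\<^sub>m k *\<^sub>v u) $ a"
      using \<open>x ^ k \<cdot>\<^sub>v u \<le> T ^\<^sub>m k *\<^sub>v u\<close> a u unfolding less_eq_vec_def by simp
    also have "\<dots> = (\<Sum>j<n. (T ^\<^sub>m k) $$ (a, j) * u $ j)"
      using T u a by (intro index_mult_mat_vec_sum) simp_all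
    also have "\<dots> \<le> (\<Sum>j<n. C * u $ j)"
    proof (rule sum_mono, rule mult_right_mono)
      fix j assume "j \<in> {..<n}"
      then show "(T ^\<^sub>m k) $$ (a, j) \<le> C" and "0 \<le> u $ j"
        using C[of a j k] a u unfolding less_eq_vec_def by auto
    qed
    finally show ?thesis
      by (simp add: sum_distrib_left)
  qed
  obtain k where "C * (\<Sum>j<n. u $ j) / u $ a < x ^ k"
    using real_arch_pow[OF \<open>1 < x\<close>] by blast
  with bounded[of k] a(2) show False
    by (simp add: divide_less_eq)
qed

lemma real_spectral_radius_subinvariant_vector:
  assumes A: "A \<in> carrier_mat n n" and "nonneg_mat A" and "0 < n"
  obtains u where "u \<in> carrier_vec n" "0\<^sub>v n \<le> u" "u \<noteq> 0\<^sub>v n"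
    "real_spectral_radius A \<cdot>\<^sub>v u \<le> A *\<^sub>v u"
proof -
  let ?AC = "map_mat complex_of_real A"
  have AC: "?AC \<in> carrier_mat n n" using A by simp
  obtain ev where "eigenvalue ?AC ev" and ev: "real_spectral_radius A = norm ev"
    using spectral_radius_mem_max(1)[OF AC \<open>0 < n\<close>]
    by (auto simp: spectrum_def real_spectral_radius_def)
  then obtain w where w: "w \<in> carrier_vec n" "w \<noteq> 0\<^sub>v n" "?AC *\<^sub>v w = ev \<cdot>\<^sub>v w"
    using AC by (auto simp: eigenvalue_def eigenvector_def)
  define u where "u = map_vec norm w"
  have u: "u \<in> carrier_vec n" "0\<^sub>v n \<le> u"
    using w(1) unfolding u_def less_eq_vec_def by auto
  have "u \<noteq> 0\<^sub>v n"
    using w(1,2) unfolding u_def by (auto simp: vec_eq_iff)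
  have "norm ev * u $ i \<le> (A *\<^sub>v u) $ i" if i: "i < n" for i
  proof -
    have "norm ev * u $ i = norm ((?AC *\<^sub>v w) $ i)"
      using w i by (simp add: u_def norm_mult)
    also have "\<dots> = norm (\<Sum>j<n. complex_of_real (A $$ (i, j)) * w $ j)"
      unfolding index_mult_mat_vec_sum[OF AC w(1) i] using A i by (intro arg_cong[where f = norm] sum.cong) auto
    also have "\<dots> \<le> (\<Sum>j<n. A $$ (i, j) * u $ j)"
      using \<open>nonneg_mat A\<close> A w(1) i
      by (intro sum_norm_le) (auto simp: u_def norm_mult nonneg_mat_def)
    also have "\<dots> = (A *\<^sub>v u) $ i"
      using index_mult_mat_vec_sum[OF A u(1) i] by simp
    finally show ?thesis .
  qed
  then have "real_spectral_radius A \<cdot>\<^sub>v u \<le> A *\<^sub>v u"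
    using A u(1) ev unfolding less_eq_vec_def by simp
  then show thesis
    using that u \<open>u \<noteq> 0\<^sub>v n\<close> by blast
qed

lemma real_spectral_radius_le_of_intertwining:
  assumes A: "A \<in> carrier_mat n n" "nonneg_mat A" "0 < n"
    and S: "S \<in> carrier_mat m m" "nonneg_mat S"
    and carrier: "\<And>u. u \<in> carrier_vec n \<Longrightarrow> T u \<in> carrier_vec m"
    and smult: "\<And>c u. u \<in> carrier_vec n \<Longrightarrow> T (c \<cdot>\<^sub>v u) = c \<cdot>\<^sub>v T u"
    and mono: "\<And>u v. u \<le> v \<Longrightarrow> v \<in> carrier_vec n \<Longrightarrow> T u \<le> T v"
    and nonzero: "\<And>u. u \<in> carrier_vec n \<Longrightarrow> 0\<^sub>v n \<le> u \<Longrightarrow> u \<noteq> 0\<^sub>v n \<Longrightarrow> T u \<noteq> 0\<^sub>v m"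
    and intertwine: "\<And>u. u \<in> carrier_vec n \<Longrightarrow> T (A *\<^sub>v u) = S *\<^sub>v T u"
  shows "real_spectral_radius A \<le> real_spectral_radius S"
proof -
  obtain u where u: "u \<in> carrier_vec n" "0\<^sub>v n \<le> u" "u \<noteq> 0\<^sub>v n"
    and sub: "real_spectral_radius A \<cdot>\<^sub>v u \<le> A *\<^sub>v u"
    using real_spectral_radius_subinvariant_vector[OF A] .
  have "T (0\<^sub>v n) = T (0 \<cdot>\<^sub>v 0\<^sub>v n)"
    by (intro arg_cong[where f = T] eq_vecI) simp_all
  also have "\<dots> = 0\<^sub>v m"
    using smult[of "0\<^sub>v n" 0] carrier[of "0\<^sub>v n"] by (intro eq_vecI) simp_all
  finally have "T (0\<^sub>v n) = 0\<^sub>v m" .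
  then have "0\<^sub>v m \<le> T u"
    using mono[OF u(2,1)] by simp
  moreover have "real_spectral_radius A \<cdot>\<^sub>v T u \<le> S *\<^sub>v T u"
    using mono[OF sub] A(1) u(1) by (simp add: smult intertwine)
  ultimately show ?thesis
    using collatz_wielandt_lower_bound[OF S carrier[OF u(1)]] nonzero[OF u] by blast
qed

definition circulant_index :: "nat \<Rightarrow> nat \<Rightarrow> nat \<Rightarrow> nat" where
  "circulant_index r p q = nat ((int q - int p) mod int r)"

lemma circulant_index_less: "0 < r \<Longrightarrow> circulant_index r p q < r"
  by (simp add: circulant_index_def nat_less_iff)

lemma circulant_index_circulant_index:
  assumes "p < r"
  shows "circulant_index r (circulant_index r p q) q = p"
proof -
  have "int (circulant_index r p q) = (int q - int p) mod int r"
    using assms by (simp add: circulant_index_def)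
  then show ?thesis
    using assms by (simp add: circulant_index_def mod_diff_right_eq)
qed

lemma sum_circulant_index_fst: "(\<Sum>p<r. g (circulant_index r p q)) = (\<Sum>k<r. g k)"
  by (rule sum.reindex_bij_witness[where i = "\<lambda>k. circulant_index r k q" and j = "\<lambda>k. circulant_index r k q"])
    (auto simp: circulant_index_less circulant_index_circulant_index)

lemma sum_circulant_index_snd: "(\<Sum>q<r. g (circulant_index r p q)) = (\<Sum>k<r. g k)"
  by (rule sum.reindex_bij_witness[where i = "\<lambda>k. nat ((int k + int p) mod int r)" and j = "\<lambda>q. circulant_index r p q"])
    (auto simp: circulant_index_def circulant_index_less nat_less_iff mod_diff_left_eq mod_add_left_eq)

lemma less_mult_imp_mod_less: "m < i * n \<Longrightarrow> m mod n < (n :: nat)"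
  by (cases "n = 0") auto

lemma block_index_less:
  fixes p a r s :: nat
  assumes "p < r" and "a < s"
  shows "p * s + a < r * s"
proof -
  have "Suc p * s \<le> r * s"
    using assms by (intro mult_le_mono1) simp
  then show ?thesis
    using assms by simp
qed

lemma sum_lessThan_mult_blocks:
  fixes r s :: nat
  shows "(\<Sum>j<r * s. f j) = (\<Sum>q<r. \<Sum>b<s. f (q * s + b))"
proof -
  have "(\<Sum>j<r * s. f j) = (\<Sum>q<r. sum f {q * s..<q * s + s})"
    by (rule sum.nat_group[symmetric])
  also have "\<dots> = (\<Sum>q<r. \<Sum>b<s. f (q * s + b))"
  proof (rule sum.cong[OF refl])
    fix q
    show "sum f {q * s..<q * s + s} = (\<Sum>b<s. f (q * s + b))"
      using sum.shift_bounds_nat_ivl[of f 0 "q * s" s] by (simp add: atLeast0LessThan add.commute)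
  qed
  finally show ?thesis .
qed

lemma block_circulant_carrier: "block_circulant r s B \<in> carrier_mat (r * s) (r * s)"
  by (simp add: block_circulant_def)

lemma block_circulant_block:
  assumes "p < r" "a < s" "q < r" "b < s"
  shows "block_circulant r s B $$ (p * s + a, q * s + b) = B (circulant_index r p q) $$ (a, b)"
  using assms block_index_less[of p r a s] block_index_less[of q r b s]
  by (simp add: block_circulant_def circulant_index_def)

lemma nonneg_mat_block_circulant:
  assumes "\<And>k i j. k < r \<Longrightarrow> i < s \<Longrightarrow> j < s \<Longrightarrow> 0 \<le> B k $$ (i, j)"
  shows "nonneg_mat (block_circulant r s B)"
proof -
  have "0 \<le> block_circulant r s B $$ (i, j)" if "i < r * s" and "j < r * s" for i j
  proof -
    have "0 < r"
      using that by (cases "r = 0") auto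
    then show ?thesis
      using that assms[of "circulant_index r (i div s) (j div s)" "i mod s" "j mod s"]
      by (simp add: block_circulant_def circulant_index_def[symmetric] circulant_index_less
          less_mult_imp_mod_less)
  qed
  then show ?thesis
    by (simp add: nonneg_mat_def block_circulant_def)
qed

definition block_sum_mat :: "nat \<Rightarrow> nat \<Rightarrow> (nat \<Rightarrow> real mat) \<Rightarrow> real mat" where
  "block_sum_mat r s B = mat s s (\<lambda>(i, j). \<Sum>k<r. B k $$ (i, j))"

lemma block_sum_mat_carrier: "block_sum_mat r s B \<in> carrier_mat s s"
  by (simp add: block_sum_mat_def)

lemma nonneg_mat_block_sum_mat:
  assumes "\<And>k i j. k < r \<Longrightarrow> i < s \<Longrightarrow> j < s \<Longrightarrow> 0 \<le> B k $$ (i, j)"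
  shows "nonneg_mat (block_sum_mat r s B)"
  using assms by (auto simp: nonneg_mat_def block_sum_mat_def intro!: sum_nonneg)

lemma block_circulant_mult_vec_block:
  assumes y: "y \<in> carrier_vec (r * s)" and "p < r" and "a < s"
  shows "(block_circulant r s B *\<^sub>v y) $ (p * s + a)
    = (\<Sum>q<r. \<Sum>b<s. B (circulant_index r p q) $$ (a, b) * y $ (q * s + b))"
  using assms block_index_less[OF assms(2,3)]
  by (simp add: index_mult_mat_vec_sum[OF block_circulant_carrier y] sum_lessThan_mult_blocks
      block_circulant_block)

definition fold_blocks :: "nat \<Rightarrow> nat \<Rightarrow> real vec \<Rightarrow> real vec" where
  "fold_blocks r s y = vec s (\<lambda>a. \<Sum>p<r. y $ (p * s + a))"

definition repeat_blocks :: "nat \<Rightarrow> nat \<Rightarrow> real vec \<Rightarrow> real vec" where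
  "repeat_blocks r s v = vec (r * s) (\<lambda>i. v $ (i mod s))"

lemma fold_blocks_carrier: "fold_blocks r s y \<in> carrier_vec s"
  by (simp add: fold_blocks_def)

lemma repeat_blocks_carrier: "repeat_blocks r s v \<in> carrier_vec (r * s)"
  by (simp add: repeat_blocks_def)

lemma fold_blocks_block_circulant_mult_vec:
  assumes y: "y \<in> carrier_vec (r * s)"
  shows "fold_blocks r s (block_circulant r s B *\<^sub>v y) = block_sum_mat r s B *\<^sub>v fold_blocks r s y"
proof (rule eq_vecI)
  fix a assume "a < dim_vec (block_sum_mat r s B *\<^sub>v fold_blocks r s y)"
  then have a: "a < s"
    by (simp add: block_sum_mat_def)
  have "fold_blocks r s (block_circulant r s B *\<^sub>v y) $ a
      = (\<Sum>p<r. \<Sum>q<r. \<Sum>b<s. B (circulant_index r p q) $$ (a, b) * y $ (q * s + b))"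
    using a y by (simp add: fold_blocks_def block_circulant_mult_vec_block)
  also have "\<dots> = (\<Sum>q<r. \<Sum>b<s. \<Sum>p<r. B (circulant_index r p q) $$ (a, b) * y $ (q * s + b))"
    by (subst sum.swap, rule sum.cong[OF refl], rule sum.swap)
  also have "\<dots> = (\<Sum>q<r. \<Sum>b<s. (\<Sum>k<r. B k $$ (a, b)) * y $ (q * s + b))"
    by (simp add: sum_distrib_right[symmetric] sum_circulant_index_fst[where g = "\<lambda>k. B k $$ _"])
  also have "\<dots> = (\<Sum>b<s. (\<Sum>k<r. B k $$ (a, b)) * (\<Sum>q<r. y $ (q * s + b)))"
    by (subst sum.swap) (simp add: sum_distrib_left)
  also have "\<dots> = (block_sum_mat r s B *\<^sub>v fold_blocks r s y) $ a"
    unfolding index_mult_mat_vec_sum[OF block_sum_mat_carrier fold_blocks_carrier a]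
    using a by (simp add: block_sum_mat_def fold_blocks_def)
  finally show "fold_blocks r s (block_circulant r s B *\<^sub>v y) $ a = (block_sum_mat r s B *\<^sub>v fold_blocks r s y) $ a" .
qed (simp add: fold_blocks_def block_sum_mat_def)

lemma block_circulant_mult_repeat_blocks:
  assumes v: "v \<in> carrier_vec s"
  shows "block_circulant r s B *\<^sub>v repeat_blocks r s v = repeat_blocks r s (block_sum_mat r s B *\<^sub>v v)"
proof (rule eq_vecI)
  fix i assume "i < dim_vec (repeat_blocks r s (block_sum_mat r s B *\<^sub>v v))"
  then have i: "i < r * s"
    by (simp add: repeat_blocks_def)
  define p a where "p = i div s" and "a = i mod s"
  have p: "p < r" and a: "a < s" and i_eq: "i = p * s + a"
    using i by (simp_all add: p_def a_def less_mult_imp_div_less less_mult_imp_mod_less)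
  have "(block_circulant r s B *\<^sub>v repeat_blocks r s v) $ i
      = (\<Sum>q<r. \<Sum>b<s. B (circulant_index r p q) $$ (a, b) * v $ b)"
    unfolding i_eq block_circulant_mult_vec_block[OF repeat_blocks_carrier p a]
    by (intro sum.cong refl) (simp add: repeat_blocks_def block_index_less)
  also have "\<dots> = (\<Sum>b<s. (\<Sum>q<r. B (circulant_index r p q) $$ (a, b)) * v $ b)"
    by (subst sum.swap) (simp add: sum_distrib_right)
  also have "\<dots> = (\<Sum>b<s. (\<Sum>k<r. B k $$ (a, b)) * v $ b)"
    by (simp add: sum_circulant_index_snd[where g = "\<lambda>k. B k $$ _"])
  also have "\<dots> = (block_sum_mat r s B *\<^sub>v v) $ a"
    unfolding index_mult_mat_vec_sum[OF block_sum_mat_carrier v a]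
    using a by (simp add: block_sum_mat_def)
  also have "\<dots> = repeat_blocks r s (block_sum_mat r s B *\<^sub>v v) $ i"
    using i by (simp add: repeat_blocks_def a_def)
  finally show "(block_circulant r s B *\<^sub>v repeat_blocks r s v) $ i
      = repeat_blocks r s (block_sum_mat r s B *\<^sub>v v) $ i" .
qed (simp add: repeat_blocks_def block_circulant_def)

lemma fold_blocks_smult:
  assumes "y \<in> carrier_vec (r * s)"
  shows "fold_blocks r s (c \<cdot>\<^sub>v y) = c \<cdot>\<^sub>v fold_blocks r s y"
  using assms by (intro eq_vecI) (auto simp: fold_blocks_def block_index_less sum_distrib_left)

lemma fold_blocks_mono:
  assumes "y \<le> z" and "z \<in> carrier_vec (r * s)"
  shows "fold_blocks r s y \<le> fold_blocks r s z"
  using assms block_index_less[of _ r _ s]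
  unfolding less_eq_vec_def fold_blocks_def by (auto intro!: sum_mono)

lemma fold_blocks_nonzero:
  assumes "y \<in> carrier_vec (r * s)" and "0\<^sub>v (r * s) \<le> y" and "y \<noteq> 0\<^sub>v (r * s)"
  shows "fold_blocks r s y \<noteq> 0\<^sub>v s"
proof -
  obtain i where i: "i < r * s" "0 < y $ i"
    using assms unfolding less_eq_vec_def by (metis eq_vecI carrier_vecD index_zero_vec order_le_less)
  define p a where "p = i div s" and "a = i mod s"
  have p: "p < r" and a: "a < s" and i_eq: "i = p * s + a"
    using i by (simp_all add: p_def a_def less_mult_imp_div_less less_mult_imp_mod_less)
  have "y $ (p * s + a) \<le> (\<Sum>p'<r. y $ (p' * s + a))"
    using p assms(2) block_index_less[OF _ a, of _ r] unfolding less_eq_vec_def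
    by (intro member_le_sum) auto
  then have "fold_blocks r s y $ a \<noteq> 0"
    using a i i_eq by (simp add: fold_blocks_def)
  then show ?thesis
    using a by auto
qed

lemma repeat_blocks_smult:
  assumes "v \<in> carrier_vec s"
  shows "repeat_blocks r s (c \<cdot>\<^sub>v v) = c \<cdot>\<^sub>v repeat_blocks r s v"
  using assms by (intro eq_vecI) (auto simp: repeat_blocks_def less_mult_imp_mod_less)

lemma repeat_blocks_mono:
  assumes "v \<le> w" and "w \<in> carrier_vec s"
  shows "repeat_blocks r s v \<le> repeat_blocks r s w"
  using assms unfolding less_eq_vec_def repeat_blocks_def by (auto simp: less_mult_imp_mod_less)

lemma repeat_blocks_nonzero:
  assumes "0 < r" and "v \<in> carrier_vec s" and "v \<noteq> 0\<^sub>v s"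
  shows "repeat_blocks r s v \<noteq> 0\<^sub>v (r * s)"
proof -
  obtain a where a: "a < s" "v $ a \<noteq> 0"
    using assms(2,3) by (metis eq_vecI carrier_vecD index_zero_vec)
  then have "a < r * s"
    using block_index_less[OF assms(1) a(1)] by simp
  then show ?thesis
    using a by (auto simp: repeat_blocks_def vec_eq_iff)
qed

lemma real_spectral_radius_block_circulant_le:
  assumes "0 < r" and "0 < s" and nonneg: "\<And>k i j. k < r \<Longrightarrow> i < s \<Longrightarrow> j < s \<Longrightarrow> 0 \<le> B k $$ (i, j)"
  shows "real_spectral_radius (block_circulant r s B) \<le> real_spectral_radius (block_sum_mat r s B)"
  by (rule real_spectral_radius_le_of_intertwining[OF block_circulant_carrier
        nonneg_mat_block_circulant[OF nonneg] _ block_sum_mat_carrier nonneg_mat_block_sum_mat[OF nonneg]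
        fold_blocks_carrier fold_blocks_smult fold_blocks_mono fold_blocks_nonzero
        fold_blocks_block_circulant_mult_vec])
    (use assms in simp_all)

lemma real_spectral_radius_block_sum_le:
  assumes "0 < r" and "0 < s" and nonneg: "\<And>k i j. k < r \<Longrightarrow> i < s \<Longrightarrow> j < s \<Longrightarrow> 0 \<le> B k $$ (i, j)"
  shows "real_spectral_radius (block_sum_mat r s B) \<le> real_spectral_radius (block_circulant r s B)"
  by (rule real_spectral_radius_le_of_intertwining[OF block_sum_mat_carrier
        nonneg_mat_block_sum_mat[OF nonneg] \<open>0 < s\<close> block_circulant_carrier nonneg_mat_block_circulant[OF nonneg]
        repeat_blocks_carrier repeat_blocks_smult repeat_blocks_mono
        repeat_blocks_nonzero[OF \<open>0 < r\<close>] block_circulant_mult_repeat_blocks[symmetric]])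
    simp_all

theorem lemma3p4:
  fixes r s :: nat and B :: "nat \<Rightarrow> real mat"
  assumes "r \<ge> 1" and "s \<ge> 1"
    and "\<And>k. k < r \<Longrightarrow> B k \<in> carrier_mat s s"
    and "\<And>k i j. k < r \<Longrightarrow> i < s \<Longrightarrow> j < s \<Longrightarrow> B k $$ (i, j) \<ge> 0"
  shows "real_spectral_radius (block_circulant r s B)
         = real_spectral_radius (mat s s (\<lambda>(i, j). \<Sum>k<r. B k $$ (i, j)))"
  \<comment> \<open>The dimensions of the blocks are irrelevant: both matrices only read their entries below s.\<close>
  using real_spectral_radius_block_circulant_le[of r s B] real_spectral_radius_block_sum_le[of r s B] assms
  unfolding block_sum_mat_def by simp

end
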